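(* Let $L_0$ be the boundary value problem on the tree $G$ (with $m$ edges, vertex set $V$ and boundary conditions BC) with $\sigma_j\equiv0$ and $\gamma_j=0$ for all $j$, and let $\Delta_0(\lambda)$ be its characteristic function. Then, as $\rho=i\tau$, $\tau\to+\infty$, $$\Delta_0(\rho^2)=\tau^{1-d}\,2^{-m}\prod_{v\in V}|E_v|\,\exp(m\tau\pi)\,(1+o(1)),$$ where $d$ is the number of Dirichlet conditions among BC and $|E_v|$ is the degree of $v$.
   Context: Let $G$ be a finite tree with vertex set $V$ and edges $e_1,\dots,e_m$ ($m\ge1$), all of length $\pi$; $E_v$ is the set of edges incident to $v$. Vertices of degree $1$ are boundary vertices, the others internal. Each edge $e_j$ is parametrized by $x_j\in[0,\pi]$. For the zero-potential problem all quasi-derivatives are ordinary derivatives. The problem $L_0$: $-y_j''=\lambda y_j$ on $(0,\pi)$, $j=1,\dots,m$; at each internal vertex $v$, continuity $y_j(v)=y_k(v)$ ($e_j,e_k\in E_v$) and Kirchhoff's condition $\sum_{e_j\in E_v}y_j^{[1]}(v)=0$, where $y_j^{[1]}(v)=-y_j'(0)$ if $v$ corresponds to $x_j=0$ and $y_j^{[1]}(v)=y_j'(\pi)$ if $v$ corresponds to $x_j=\pi$; at each boundary vertex either Dirichlet $y(v)=0$ or Neumann $y^{[1]}(v)=0$ (a fixed choice BC). Let $C_j,S_j$ solve $-y''=\lambda y$ with $C_j(0)=S_j'(0)=1$, $C_j'(0)=S_j(0)=0$. The characteristic function is defined recursively: for $m=1$, it is $S_1(\pi,\lambda)$, $S_1'(\pi,\lambda)$,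 $C_1(\pi,\lambda)$, $C_1'(\pi,\lambda)$ for the conditions $y(0)=y(\pi)=0$, $y(0)=y'(\pi)=0$, $y'(0)=y(\pi)=0$, $y'(0)=y'(\pi)=0$ respectively; for $m>1$, choose an internal vertex $u$ of degree $s$, split $G$ at $u$ into subtrees $G_1,\dots,G_s$, let $\Delta_j^D,\Delta_j^N$ be characteristic functions of the analogous problems on $G_j$ with Dirichlet, resp. Neumann, condition at $u$ (other conditions unchanged), and set $\Delta=\sum_{j}\Delta_j^N\prod_{k\ne j}\Delta_k^D$. Here $\rho=\sqrt\lambda$, $\mathrm{Re}\,\rho\ge 0$. *)

theory Defs
  imports "HOL-Analysis.Analysis"
begin

text \<open>A tree is given by a finite set of oriented edges (a,b): the edge is parametrized
  by x in [0,pi], the vertex a corresponding to x = 0 and b to x = pi.\<close>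

definition verts :: "('v \<times> 'v) set \<Rightarrow> 'v set" where
  "verts E = fst ` E \<union> snd ` E"

definition incident :: "('v \<times> 'v) set \<Rightarrow> 'v \<Rightarrow> ('v \<times> 'v) set" where
  "incident E v = {e \<in> E. fst e = v \<or> snd e = v}"

definition degree :: "('v \<times> 'v) set \<Rightarrow> 'v \<Rightarrow> nat" where
  "degree E v = card (incident E v)"

definition adj :: "('v \<times> 'v) set \<Rightarrow> ('v \<times> 'v) set" where
  "adj E = E \<union> converse E"

definition is_tree :: "('v \<times> 'v) set \<Rightarrow> bool" where
  "is_tree E \<longleftrightarrow> finite E \<and> E \<noteq> {} \<and> (\<forall>(a,b)\<in>E. a \<noteq> b)
     \<and> (\<forall>x\<in>verts E. \<forall>y\<in>verts E. (x, y) \<in> (adj E)\<^sup>*)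
     \<and> card (verts E) = card E + 1"

text \<open>Solutions of -y'' = lambda y (zero potential):
  C(0)=1, C'(0)=0, S(0)=0, S'(0)=1, written in closed form.\<close>

definition S0 :: "complex \<Rightarrow> real \<Rightarrow> complex" where
  "S0 l x = (if l = 0 then of_real x else sin (csqrt l * of_real x) / csqrt l)"

definition S0' :: "complex \<Rightarrow> real \<Rightarrow> complex" where
  "S0' l x = cos (csqrt l * of_real x)"

definition C0 :: "complex \<Rightarrow> real \<Rightarrow> complex" where
  "C0 l x = cos (csqrt l * of_real x)"

definition C0' :: "complex \<Rightarrow> real \<Rightarrow> complex" where
  "C0' l x = - csqrt l * sin (csqrt l * of_real x)"

text \<open>Boundary conditions: dir v = True means Dirichlet at v, False means Neumann
  (only relevant at boundary vertices).
  char_fn E dir D: D is a characteristic function of the zero-potential problem L_0 on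
  the tree E with boundary conditions dir, obtained by the recursive definition
  (for any admissible choices of splitting vertices).\<close>

inductive char_fn :: "('v \<times> 'v) set \<Rightarrow> ('v \<Rightarrow> bool) \<Rightarrow> (complex \<Rightarrow> complex) \<Rightarrow> bool" where
  single: "a \<noteq> b \<Longrightarrow>
    char_fn {(a, b)} dir
      (\<lambda>l. if dir a then (if dir b then S0 l pi else S0' l pi)
                     else (if dir b then C0 l pi else C0' l pi))"
| split: "\<lbrakk> is_tree E; u \<in> verts E; degree E u \<ge> 2;
           \<forall>e\<in>incident E u. e \<in> T e \<and> T e \<subseteq> E \<and> is_tree (T e);
           (\<Union>e\<in>incident E u. T e) = E;
           \<forall>e\<in>incident E u. \<forall>f\<in>incident E u. e \<noteq> f \<longrightarrow> verts (T e) \<inter> verts (T f) = {u};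
           \<forall>e\<in>incident E u. char_fn (T e) (dir(u := True)) (DD e)
                              \<and> char_fn (T e) (dir(u := False)) (DN e) \<rbrakk>
   \<Longrightarrow> char_fn E dir
         (\<lambda>l. \<Sum>e\<in>incident E u. DN e l * (\<Prod>f\<in>incident E u - {e}. DD f l))"

end

theory Submission
  imports Defs "HOL-Real_Asymp.Real_Asymp"
begin

text \<open>At \<open>\<rho> = \<i>\<tau>\<close> the four single-edge characteristic functions are
  \<open>sinh(\<tau>\<pi>)/\<tau>\<close>, \<open>cosh(\<tau>\<pi>)\<close>, \<open>cosh(\<tau>\<pi>)\<close> and \<open>\<tau> sinh(\<tau>\<pi>)\<close>, all asymptotic
  to \<open>\<tau>^(1 - d) exp(\<tau>\<pi>) / 2\<close>. For the recursion at a vertex \<open>u\<close> of degree \<open>s\<close>, the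
  subtrees partition the edges, the Dirichlet leaves and the vertices other than \<open>u\<close>, and
  \<open>u\<close> has degree 1 in each of them; the Neumann condition at \<open>u\<close> removes one Dirichlet
  leaf and so gains one factor \<open>\<tau>\<close>. Hence by induction each of the \<open>s\<close> summands
  \<open>\<Delta>\<^sub>j\<^sup>N \<Prod>\<^sub>k\<^sub>\<noteq>\<^sub>j \<Delta>\<^sub>k\<^sup>D\<close> is asymptotic to \<open>1/s\<close> times the claimed
  expression for the whole tree, the degree \<open>s\<close> of \<open>u\<close> being the missing factor of
  \<open>\<Prod>\<^sub>v |E\<^sub>v|\<close>.\<close>

lemma tendsto_sum_prod_ratio:
  fixes DN DD :: "'a \<Rightarrow> 'b \<Rightarrow> 'c::real_normed_field" and gN gD :: "'a \<Rightarrow> 'b \<Rightarrow> real"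
  assumes "finite I" "I \<noteq> {}"
    and DN: "\<And>e. e \<in> I \<Longrightarrow> ((\<lambda>x. DN e x / of_real (gN e x)) \<longlongrightarrow> 1) F"
    and DD: "\<And>e. e \<in> I \<Longrightarrow> ((\<lambda>x. DD e x / of_real (gD e x)) \<longlongrightarrow> 1) F"
    and g: "\<forall>\<^sub>F x in F. g x \<noteq> 0 \<and> (\<forall>e\<in>I. gN e x * (\<Prod>f\<in>I - {e}. gD f x) = g x / real (card I))"
  shows "((\<lambda>x. (\<Sum>e\<in>I. DN e x * (\<Prod>f\<in>I - {e}. DD f x)) / of_real (g x)) \<longlongrightarrow> 1) F"
proof -
  have card: "card I > 0"
    using assms(1,2) by (simp add: card_gt_0_iff)
  let ?r = "\<lambda>x. (\<Sum>e\<in>I. DN e x / of_real (gN e x) * (\<Prod>f\<in>I - {e}. DD f x / of_real (gD f x)))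
    / of_nat (card I)"
  have "(?r \<longlongrightarrow> (\<Sum>e\<in>I. 1 * (\<Prod>f\<in>I - {e}. 1)) / of_nat (card I)) F"
    by (intro tendsto_intros DN DD) (use card in auto)
  moreover have "(\<Sum>e\<in>I. 1 * (\<Prod>f\<in>I - {e}. 1)) / of_nat (card I) = (1::'c)"
    using card by simp
  moreover have "\<forall>\<^sub>F x in F. ?r x = (\<Sum>e\<in>I. DN e x * (\<Prod>f\<in>I - {e}. DD f x)) / of_real (g x)"
    using g
  proof eventually_elim
    case (elim x)
    have "DN e x / of_real (gN e x) * (\<Prod>f\<in>I - {e}. DD f x / of_real (gD f x))
        = (DN e x * (\<Prod>f\<in>I - {e}. DD f x)) / of_real (gN e x * (\<Prod>f\<in>I - {e}. gD f x))"
      for e by (simp add: prod_dividef)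
    also have "\<dots> e = of_nat (card I) * (DN e x * (\<Prod>f\<in>I - {e}. DD f x)) / of_real (g x)"
      if "e \<in> I" for e
      using elim that card by simp
    finally show ?case
      using card by (simp add: sum_divide_distrib)
  qed
  ultimately show ?thesis
    by (simp add: tendsto_cong)
qed

lemma csqrt_i_times_square: "\<tau> > 0 \<Longrightarrow> csqrt ((\<i> * complex_of_real \<tau>)\<^sup>2) = \<i> * of_real \<tau>"
  by (rule csqrt_unique) auto

lemma cosh_of_real: "cosh (complex_of_real x) = of_real (cosh x)"
  by (simp add: cosh_field_def flip: exp_of_real)

lemma sinh_of_real: "sinh (complex_of_real x) = of_real (sinh x)"
  by (simp add: sinh_field_def flip: exp_of_real)

lemma sin_i_times_of_real: "sin (\<i> * complex_of_real x) = \<i> * of_real (sinh x)"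
  by (simp add: sin_conv_sinh sinh_of_real)

lemma cos_i_times_of_real: "cos (\<i> * complex_of_real x) = of_real (cosh x)"
  by (simp add: cos_conv_cosh cosh_of_real)

lemma csqrt_i_times_square_mult:
  "\<tau> > 0 \<Longrightarrow> csqrt ((\<i> * complex_of_real \<tau>)\<^sup>2) * of_real x = \<i> * of_real (\<tau> * x)"
  by (simp add: csqrt_i_times_square)

lemma card_doubleton_filter:
  assumes "a \<noteq> b"
  shows "card {v \<in> {a, b}. P v} = of_bool (P a) + of_bool (P b)"
proof -
  have "{v \<in> {a, b}. P v} = (if P a then {a} else {}) \<union> (if P b then {b} else {})"
    by auto
  then show ?thesis
    using assms by (cases "P a"; cases "P b") simp_all
qed

definition dirichlet_leaves :: "('v \<times> 'v) set \<Rightarrow> ('v \<Rightarrow> bool) \<Rightarrow> 'v set" where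
  "dirichlet_leaves E dir = {v \<in> verts E. degree E v = 1 \<and> dir v}"

definition char_asymp :: "('v \<times> 'v) set \<Rightarrow> ('v \<Rightarrow> bool) \<Rightarrow> real \<Rightarrow> real" where
  "char_asymp E dir \<tau> = \<tau> powi (1 - int (card (dirichlet_leaves E dir))) * (1 / 2 ^ card E)
     * (\<Prod>v\<in>verts E. real (degree E v)) * exp (real (card E) * \<tau> * pi)"

lemma char_asymp_eq_divide:
  assumes "\<tau> > 0"
  shows "char_asymp E dir \<tau> = \<tau> * (\<Prod>v\<in>verts E. real (degree E v)) * exp (real (card E) * \<tau> * pi)
           / (2 ^ card E * \<tau> ^ card (dirichlet_leaves E dir))"
  using assms by (simp add: char_asymp_def power_int_diff)

lemma finite_verts: "finite E \<Longrightarrow> finite (verts E)"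
  by (simp add: verts_def)

lemma degree_gt_0:
  assumes "finite E" "v \<in> verts E"
  shows "degree E v > 0"
proof -
  from assms(2) obtain e where "e \<in> incident E v"
    unfolding verts_def incident_def by force
  moreover have "finite (incident E v)"
    using assms(1) by (simp add: incident_def)
  ultimately show ?thesis
    unfolding degree_def by (auto simp: card_gt_0_iff)
qed

lemma char_asymp_pos:
  assumes "finite E" "\<tau> > 0"
  shows "char_asymp E dir \<tau> > 0"
  using assms degree_gt_0[OF assms(1)] by (simp add: char_asymp_eq_divide prod_pos)

lemma tree_edge_distinct: "is_tree E \<Longrightarrow> (a, b) \<in> E \<Longrightarrow> a \<noteq> b"
  unfolding is_tree_def by blast

locale tree_split =
  fixes E :: "('v \<times> 'v) set" and u :: 'v and T :: "'v \<times> 'v \<Rightarrow> ('v \<times> 'v) set"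
  assumes tree: "is_tree E"
    and u_in_verts: "u \<in> verts E"
    and degree_u_ge_2: "degree E u \<ge> 2"
    and subtree: "\<forall>e\<in>incident E u. e \<in> T e \<and> T e \<subseteq> E \<and> is_tree (T e)"
    and subtrees_cover: "(\<Union>e\<in>incident E u. T e) = E"
    and subtrees_meet: "\<forall>e\<in>incident E u. \<forall>f\<in>incident E u. e \<noteq> f \<longrightarrow> verts (T e) \<inter> verts (T f) = {u}"
begin

abbreviation I where "I \<equiv> incident E u"

lemma finite_E: "finite E"
  using tree by (simp add: is_tree_def)

lemma finite_I: "finite I"
  using finite_E by (simp add: incident_def)

lemma card_I_pos: "card I > 0"
  using degree_u_ge_2 by (simp add: degree_def)

lemma edge_in_subtree: "e \<in> I \<Longrightarrow> e \<in> T e"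
  using subtree by blast

lemma subtree_subset: "e \<in> I \<Longrightarrow> T e \<subseteq> E"
  using subtree by blast

lemma finite_subtree: "e \<in> I \<Longrightarrow> finite (T e)"
  by (rule finite_subset[OF subtree_subset finite_E])

lemma subtrees_disjoint:
  assumes "e \<in> I" "f \<in> I" "e \<noteq> f"
  shows "T e \<inter> T f = {}"
proof (rule ccontr)
  assume "T e \<inter> T f \<noteq> {}"
  then obtain g where g: "g \<in> T e" "g \<in> T f" by auto
  then have "fst g \<in> verts (T e) \<inter> verts (T f)" "snd g \<in> verts (T e) \<inter> verts (T f)"
    unfolding verts_def by auto
  then have "fst g = u" "snd g = u"
    using subtrees_meet assms by auto
  moreover have "g \<in> E"
    using subtree_subset[OF assms(1)] g(1) by (rule subsetD)
  ultimately show False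
    using tree_edge_distinct[OF tree, of "fst g" "snd g"] by (metis prod.collapse)
qed

lemma card_eq_sum_subtrees: "card E = (\<Sum>e\<in>I. card (T e))"
proof -
  have "card E = card (\<Union>e\<in>I. T e)"
    using subtrees_cover by simp
  also have "\<dots> = (\<Sum>e\<in>I. card (T e))"
    by (rule card_UN_disjoint) (use finite_I finite_subtree subtrees_disjoint in auto)
  finally show ?thesis .
qed

lemma verts_eq_UN_subtrees: "verts E = (\<Union>e\<in>I. verts (T e))"
proof -
  have "verts (\<Union>e\<in>I. T e) = (\<Union>e\<in>I. verts (T e))"
    by (auto simp: verts_def)
  then show ?thesis using subtrees_cover by simp
qed

lemma u_in_subtree:
  assumes "e \<in> I"
  shows "u \<in> verts (T e)"
proof -
  have "e \<in> T e" "fst e = u \<or> snd e = u"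
    using edge_in_subtree assms by (auto simp: incident_def)
  then show ?thesis
    unfolding verts_def by (metis UnI1 UnI2 image_eqI)
qed

lemma incident_subtree_u:
  assumes "e \<in> I"
  shows "incident (T e) u = {e}"
proof
  show "{e} \<subseteq> incident (T e) u"
    using edge_in_subtree assms by (auto simp: incident_def)
  show "incident (T e) u \<subseteq> {e}"
  proof
    fix g assume g: "g \<in> incident (T e) u"
    then have "g \<in> I"
      using subtree_subset[OF assms] by (auto simp: incident_def)
    then have "g \<in> T g"
      by (rule edge_in_subtree)
    moreover have "g \<in> T e"
      using g by (simp add: incident_def)
    ultimately show "g \<in> {e}"
      using subtrees_disjoint[OF assms \<open>g \<in> I\<close>] by blast
  qed
qed

lemma degree_subtree_u: "e \<in> I \<Longrightarrow> degree (T e) u = 1"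
  by (simp add: degree_def incident_subtree_u)

lemma degree_subtree:
  assumes "e \<in> I" "w \<in> verts (T e)" "w \<noteq> u"
  shows "degree (T e) w = degree E w"
proof -
  have "incident E w \<subseteq> incident (T e) w"
  proof
    fix g assume g: "g \<in> incident E w"
    then have "g \<in> (\<Union>f\<in>I. T f)"
      using subtrees_cover by (simp add: incident_def)
    then obtain f where f: "f \<in> I" "g \<in> T f"
      by blast
    then have "w \<in> verts (T f)"
      using g by (force simp: incident_def verts_def)
    then have "f = e" using subtrees_meet assms f by blast
    then show "g \<in> incident (T e) w" using f g by (simp add: incident_def)
  qed
  moreover have "incident (T e) w \<subseteq> incident E w"
    using subtree_subset[OF assms(1)] by (auto simp: incident_def)
  ultimately show ?thesis by (simp add: degree_def)
qed

lemma degree_prod_split: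
  "(\<Prod>v\<in>verts E. real (degree E v)) = real (card I) * (\<Prod>e\<in>I. \<Prod>v\<in>verts (T e). real (degree (T e) v))"
proof -
  have fin: "finite (verts (T e))" if "e \<in> I" for e
    using finite_verts finite_subtree that by blast
  have subtree_prod: "(\<Prod>v\<in>verts (T e). real (degree (T e) v)) = (\<Prod>v\<in>verts (T e) - {u}. real (degree E v))"
    if e: "e \<in> I" for e
  proof -
    have "(\<Prod>v\<in>verts (T e). real (degree (T e) v))
        = real (degree (T e) u) * (\<Prod>v\<in>verts (T e) - {u}. real (degree (T e) v))"
      by (rule prod.remove[OF fin[OF e] u_in_subtree[OF e]])
    also have "\<dots> = (\<Prod>v\<in>verts (T e) - {u}. real (degree E v))"
      by (simp add: degree_subtree_u[OF e] degree_subtree[OF e])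
    finally show ?thesis .
  qed
  have fin_punctured: "\<forall>e\<in>I. finite (verts (T e) - {u})"
    using fin by blast
  have disjoint_punctured: "\<forall>e\<in>I. \<forall>f\<in>I. e \<noteq> f \<longrightarrow> (verts (T e) - {u}) \<inter> (verts (T f) - {u}) = {}"
    using subtrees_meet by blast
  have "verts E - {u} = (\<Union>e\<in>I. verts (T e) - {u})"
    using verts_eq_UN_subtrees by blast
  then have "(\<Prod>v\<in>verts E - {u}. real (degree E v)) = (\<Prod>v\<in>(\<Union>e\<in>I. verts (T e) - {u}). real (degree E v))"
    by simp
  also have "\<dots> = (\<Prod>e\<in>I. \<Prod>v\<in>verts (T e) - {u}. real (degree E v))"
    by (rule prod.UNION_disjoint[OF finite_I fin_punctured disjoint_punctured])
  also have "\<dots> = (\<Prod>e\<in>I. \<Prod>v\<in>verts (T e). real (degree (T e) v))"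
    using subtree_prod by simp
  finally show ?thesis
    by (simp add: prod.remove[OF finite_verts[OF finite_E] u_in_verts] degree_def)
qed

lemma card_dirichlet_leaves_split:
  "card (dirichlet_leaves E dir) = (\<Sum>e\<in>I. card (dirichlet_leaves (T e) (dir(u := False))))"
proof -
  have "dirichlet_leaves E dir = (\<Union>e\<in>I. dirichlet_leaves (T e) (dir(u := False)))"
  proof (intro equalityI subsetI)
    fix v assume v: "v \<in> dirichlet_leaves E dir"
    then have "v \<noteq> u" "v \<in> verts E"
      using degree_u_ge_2 by (auto simp: dirichlet_leaves_def)
    moreover obtain e where "e \<in> I" "v \<in> verts (T e)"
      using verts_eq_UN_subtrees \<open>v \<in> verts E\<close> by blast
    ultimately have "v \<in> dirichlet_leaves (T e) (dir(u := False))"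
      using v degree_subtree by (auto simp: dirichlet_leaves_def)
    then show "v \<in> (\<Union>e\<in>I. dirichlet_leaves (T e) (dir(u := False)))"
      using \<open>e \<in> I\<close> by blast
  next
    fix v assume "v \<in> (\<Union>e\<in>I. dirichlet_leaves (T e) (dir(u := False)))"
    then obtain e where e: "e \<in> I" "v \<in> dirichlet_leaves (T e) (dir(u := False))"
      by blast
    then have "v \<noteq> u" "v \<in> verts (T e)"
      by (auto simp: dirichlet_leaves_def)
    then show "v \<in> dirichlet_leaves E dir"
      using e verts_eq_UN_subtrees degree_subtree[OF e(1)] by (auto simp: dirichlet_leaves_def)
  qed
  moreover have "finite (dirichlet_leaves (T e) (dir(u := False)))" if "e \<in> I" for e
    using finite_verts[OF finite_subtree[OF that]] by (simp add: dirichlet_leaves_def)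
  moreover have "dirichlet_leaves (T e) (dir(u := False)) \<inter> dirichlet_leaves (T f) (dir(u := False)) = {}"
    if "e \<in> I" "f \<in> I" "e \<noteq> f" for e f
    using subtrees_meet that by (auto simp: dirichlet_leaves_def)
  ultimately show ?thesis
    by (simp add: card_UN_disjoint[OF finite_I])
qed

lemma card_dirichlet_leaves_u:
  assumes "e \<in> I"
  shows "card (dirichlet_leaves (T e) (dir(u := True))) = Suc (card (dirichlet_leaves (T e) (dir(u := False))))"
proof -
  have "dirichlet_leaves (T e) (dir(u := True)) = insert u (dirichlet_leaves (T e) (dir(u := False)))"
    using degree_subtree_u[OF assms] u_in_subtree[OF assms] by (auto simp: dirichlet_leaves_def)
  moreover have "finite (dirichlet_leaves (T e) (dir(u := False)))"
    using finite_verts[OF finite_subtree[OF assms]] by (simp add: dirichlet_leaves_def)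
  ultimately show ?thesis by (simp add: dirichlet_leaves_def)
qed

lemma char_asymp_split:
  assumes e: "e \<in> I" and "\<tau> > 0"
  shows "char_asymp (T e) (dir(u := False)) \<tau> * (\<Prod>f\<in>I - {e}. char_asymp (T f) (dir(u := True)) \<tau>)
         = char_asymp E dir \<tau> / real (card I)"
proof -
  define g where "g f = (\<Prod>v\<in>verts (T f). real (degree (T f) v)) * exp (real (card (T f)) * \<tau> * pi)
    / (2 ^ card (T f) * \<tau> ^ card (dirichlet_leaves (T f) (dir(u := False))))" for f
  have "char_asymp (T f) (dir(u := True)) \<tau> = g f" if "f \<in> I" for f
    using \<open>\<tau> > 0\<close> by (simp add: char_asymp_eq_divide g_def card_dirichlet_leaves_u[OF that])
  moreover have "char_asymp (T e) (dir(u := False)) \<tau> = \<tau> * g e"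
    using \<open>\<tau> > 0\<close> by (simp add: char_asymp_eq_divide g_def)
  ultimately have "char_asymp (T e) (dir(u := False)) \<tau> * (\<Prod>f\<in>I - {e}. char_asymp (T f) (dir(u := True)) \<tau>)
      = \<tau> * (\<Prod>f\<in>I. g f)"
    using prod.remove[OF finite_I e, of g] by simp
  also have "\<dots> = \<tau> * (\<Prod>f\<in>I. \<Prod>v\<in>verts (T f). real (degree (T f) v))
      * (\<Prod>f\<in>I. exp (real (card (T f)) * \<tau> * pi))
      / ((\<Prod>f\<in>I. 2 ^ card (T f)) * (\<Prod>f\<in>I. \<tau> ^ card (dirichlet_leaves (T f) (dir(u := False)))))"
    by (simp add: g_def prod_dividef prod.distrib)
  also have "\<dots> = char_asymp E dir \<tau> / real (card I)"
    using \<open>\<tau> > 0\<close> card_I_pos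
    by (simp add: char_asymp_eq_divide card_eq_sum_subtrees card_dirichlet_leaves_split
        degree_prod_split power_sum exp_sum[OF finite_I] sum_distrib_right)
  finally show ?thesis .
qed

end

lemma S0_imaginary:
  assumes "\<tau> > 0"
  shows "S0 ((\<i> * of_real \<tau>)\<^sup>2) x = of_real (sinh (\<tau> * x) / \<tau>)"
  unfolding S0_def csqrt_i_times_square_mult[OF assms]
  unfolding csqrt_i_times_square[OF assms] sin_i_times_of_real
  using assms by simp

lemma S0'_imaginary:
  assumes "\<tau> > 0"
  shows "S0' ((\<i> * of_real \<tau>)\<^sup>2) x = of_real (cosh (\<tau> * x))"
  unfolding S0'_def csqrt_i_times_square_mult[OF assms] cos_i_times_of_real ..

lemma C0_imaginary:
  assumes "\<tau> > 0"
  shows "C0 ((\<i> * of_real \<tau>)\<^sup>2) x = of_real (cosh (\<tau> * x))"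
  unfolding C0_def csqrt_i_times_square_mult[OF assms] cos_i_times_of_real ..

lemma C0'_imaginary:
  assumes "\<tau> > 0"
  shows "C0' ((\<i> * of_real \<tau>)\<^sup>2) x = of_real (\<tau> * sinh (\<tau> * x))"
  unfolding C0'_def csqrt_i_times_square_mult[OF assms]
  unfolding csqrt_i_times_square[OF assms] sin_i_times_of_real
  by (simp add: ac_simps)

lemma char_asymp_single:
  assumes "a \<noteq> b" "\<tau> > 0"
  shows "char_asymp {(a, b)} dir \<tau> = \<tau> / \<tau> ^ card {v \<in> {a, b}. dir v} * exp (\<tau> * pi) / 2"
proof -
  have "incident {(a, b)} a = {(a, b)}" "incident {(a, b)} b = {(a, b)}"
    by (auto simp: incident_def)
  then have "verts {(a, b)} = {a, b}" "degree {(a, b)} a = 1" "degree {(a, b)} b = 1"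
    by (auto simp: verts_def degree_def)
  moreover from this have "dirichlet_leaves {(a, b)} dir = {v \<in> {a, b}. dir v}"
    by (auto simp: dirichlet_leaves_def)
  ultimately show ?thesis
    using assms by (simp add: char_asymp_eq_divide)
qed

lemma char_fn_single_asymp:
  assumes "a \<noteq> b"
  shows "((\<lambda>\<tau>. (if dir a then (if dir b then S0 ((\<i> * of_real \<tau>)\<^sup>2) pi else S0' ((\<i> * of_real \<tau>)\<^sup>2) pi)
                  else (if dir b then C0 ((\<i> * of_real \<tau>)\<^sup>2) pi else C0' ((\<i> * of_real \<tau>)\<^sup>2) pi))
             / of_real (char_asymp {(a, b)} dir \<tau>)) \<longlongrightarrow> 1) at_top"
proof -
  define val where "val \<tau> = (if dir a then (if dir b then sinh (\<tau> * pi) / \<tau> else cosh (\<tau> * pi))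
                     else (if dir b then cosh (\<tau> * pi) else \<tau> * sinh (\<tau> * pi)))" for \<tau>
  define d where "d = card {v \<in> {a, b}. dir v}"
  have d: "d = of_bool (dir a) + of_bool (dir b)"
    unfolding d_def by (rule card_doubleton_filter[OF assms])
  have lim_real: "((\<lambda>\<tau>. val \<tau> / (\<tau> / \<tau> ^ d * exp (\<tau> * pi) / 2)) \<longlongrightarrow> 1) at_top"
    unfolding val_def d
    by (cases "dir a"; cases "dir b")
      (simp only: if_True if_False of_bool_eq one_add_one add_0 add_0_right; real_asymp)+
  have "((\<lambda>\<tau>. of_real (val \<tau> / (\<tau> / \<tau> ^ d * exp (\<tau> * pi) / 2)) :: complex) \<longlongrightarrow> 1) at_top"
    using tendsto_of_real[OF lim_real, where 'a=complex] by simp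
  moreover have "\<forall>\<^sub>F \<tau> in at_top. of_real (val \<tau> / (\<tau> / \<tau> ^ d * exp (\<tau> * pi) / 2))
     = (if dir a then (if dir b then S0 ((\<i> * of_real \<tau>)\<^sup>2) pi else S0' ((\<i> * of_real \<tau>)\<^sup>2) pi)
                  else (if dir b then C0 ((\<i> * of_real \<tau>)\<^sup>2) pi else C0' ((\<i> * of_real \<tau>)\<^sup>2) pi))
             / of_real (char_asymp {(a, b)} dir \<tau>)"
    using eventually_gt_at_top[of 0]
  proof eventually_elim
    case (elim \<tau>)
    then show ?case
      unfolding char_asymp_single[OF assms elim] d_def[symmetric] val_def
      by (simp add: S0_imaginary S0'_imaginary C0_imaginary C0'_imaginary)
  qed
  ultimately show ?thesis
    by (rule Lim_transform_eventually)
qed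

lemma char_fn_asymp:
  "char_fn E dir D \<Longrightarrow> ((\<lambda>\<tau>. D ((\<i> * of_real \<tau>)\<^sup>2) / of_real (char_asymp E dir \<tau>)) \<longlongrightarrow> 1) at_top"
proof (induction rule: char_fn.induct)
  case (single a b dir)
  then show ?case by (rule char_fn_single_asymp)
next
  case (split E u T dir DD DN)
  interpret tree_split E u T
    using split.hyps(1-6) by unfold_locales
  show ?case
  proof (rule tendsto_sum_prod_ratio[OF finite_I])
    show "incident E u \<noteq> {}" using card_I_pos by auto
    show "\<forall>\<^sub>F \<tau> in at_top. char_asymp E dir \<tau> \<noteq> 0 \<and>
        (\<forall>e\<in>incident E u. char_asymp (T e) (dir(u := False)) \<tau>
          * (\<Prod>f\<in>incident E u - {e}. char_asymp (T f) (dir(u := True)) \<tau>)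
          = char_asymp E dir \<tau> / real (card (incident E u)))"
      using eventually_gt_at_top[of 0]
    proof eventually_elim
      case (elim \<tau>)
      show ?case
        using char_asymp_pos[OF finite_E elim, of dir] char_asymp_split[OF _ elim] by simp
    qed
  qed (use split.IH in blast)+
qed

theorem lemma2:
  fixes E :: "('v \<times> 'v) set" and dir :: "'v \<Rightarrow> bool" and \<Delta>0 :: "complex \<Rightarrow> complex"
  assumes "is_tree E"
    and "char_fn E dir \<Delta>0"
  defines "m \<equiv> card E"
    and "d \<equiv> card {v \<in> verts E. degree E v = 1 \<and> dir v}"
  shows "((\<lambda>\<tau>::real. \<Delta>0 ((\<i> * of_real \<tau>)\<^sup>2) /
            of_real (\<tau> powi (1 - int d) * (1 / 2 ^ m) * (\<Prod>v\<in>verts E. real (degree E v))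
                     * exp (real m * \<tau> * pi)))
          \<longlongrightarrow> 1) at_top"
  using char_fn_asymp[OF assms(2)] unfolding char_asymp_def dirichlet_leaves_def m_def d_def .

end
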